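(* Let $G=(V,E)$ be a connected undirected unweighted graph on $N$ vertices and let $r>1$. For every mutant set $S$ with $\emptyset\ne S\ne V$ and every edge $\{u,v\}\in E$ with $u\in S$, $v\notin S$, $$\psi_{u,v}^{\delta=1/2}(S):=\frac12\cdot\frac{1}{w(S)}\left(\frac{r}{\deg(u)}-\frac{1}{\deg(v)}\right)+\frac12\cdot\frac1N\left(\frac{r}{w_v(S)}-\frac{1}{w_u(S)}\right)\ \ge\ \frac{r-1}{rN^3},$$ and moreover $\mathsf{AT}_r^{\delta=1/2}(G)\le\frac{r}{r-1}\cdot N^4$.
   Context: Mixed $\delta$-updating on $G$: each vertex holds a mutant (fitness $r$) or wild-type (fitness $1$); $f_S(x)\in\{1,r\}$ is the fitness at $x$ when $S$ is the mutant set. At each step, with probability $\delta$ a death-Birth step: choose $v$ uniformly to die, choose a neighbor $u$ of $v$ with probability proportional to $f_S(u)$, $u$ copies its type onto $v$; with probability $1-\delta$ a Birth-death step: choose $u$ with probability proportional to $f_S(u)$ among all vertices, choose a uniformly random neighbor $v$ of $u$, $u$ copies its type onto $v$. Notation: $w(S)=\sum_{x\in V}f_S(x)=N+(r-1)|S|$, and $w_x(S)=\sum_{y:\{x,y\}\in E}f_S(y)$ is the total fitness of the neighbors of $x$. $\mathsf{AT}_r^\delta(G,S_0)$ is the expected number of steps until the population is all mutant or all wild-type starting from $S_0$, and $\mathsf{AT}_r^\delta(G)=\max_{S_0\subseteq V}\mathsf{AT}_r^\delta(G,S_0)$. *)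

theory Defs
  imports Complex_Main "HOL-Library.Extended_Nonnegative_Real"
begin

definition simple_graph :: "'a set \<Rightarrow> ('a \<Rightarrow> 'a \<Rightarrow> bool) \<Rightarrow> bool" where
  "simple_graph V E \<longleftrightarrow> finite V \<and> V \<noteq> {} \<and>
     (\<forall>x y. E x y \<longrightarrow> x \<in> V \<and> y \<in> V) \<and>
     (\<forall>x y. E x y \<longrightarrow> E y x) \<and> (\<forall>x. \<not> E x x)"

definition connected_graph :: "'a set \<Rightarrow> ('a \<Rightarrow> 'a \<Rightarrow> bool) \<Rightarrow> bool" where
  "connected_graph V E \<longleftrightarrow> simple_graph V E \<and> (\<forall>x\<in>V. \<forall>y\<in>V. E\<^sup>*\<^sup>* x y)"

definition nbrs :: "'a set \<Rightarrow> ('a \<Rightarrow> 'a \<Rightarrow> bool) \<Rightarrow> 'a \<Rightarrow> 'a set" where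
  "nbrs V E x = {y \<in> V. E x y}"

definition deg :: "'a set \<Rightarrow> ('a \<Rightarrow> 'a \<Rightarrow> bool) \<Rightarrow> 'a \<Rightarrow> nat" where
  "deg V E x = card (nbrs V E x)"

definition fit :: "real \<Rightarrow> 'a set \<Rightarrow> 'a \<Rightarrow> real" where
  "fit r S x = (if x \<in> S then r else 1)"

definition wtot :: "'a set \<Rightarrow> real \<Rightarrow> 'a set \<Rightarrow> real" where
  "wtot V r S = (\<Sum>x\<in>V. fit r S x)"

definition wnb :: "'a set \<Rightarrow> ('a \<Rightarrow> 'a \<Rightarrow> bool) \<Rightarrow> real \<Rightarrow> 'a set \<Rightarrow> 'a \<Rightarrow> real" where
  "wnb V E r S x = (\<Sum>y\<in>nbrs V E x. fit r S y)"

definition psi :: "'a set \<Rightarrow> ('a \<Rightarrow> 'a \<Rightarrow> bool) \<Rightarrow> real \<Rightarrow> real \<Rightarrow> 'a set \<Rightarrow> 'a \<Rightarrow> 'a \<Rightarrow> real" where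
  "psi V E r \<delta> S u v =
     (1 - \<delta>) * (1 / wtot V r S) * (r / real (deg V E u) - 1 / real (deg V E v))
   + \<delta> * (1 / real (card V)) * (r / wnb V E r S v - 1 / wnb V E r S u)"

text \<open>Resulting mutant set after u copies its type onto v.\<close>
definition copy_step :: "'a set \<Rightarrow> 'a \<Rightarrow> 'a \<Rightarrow> 'a set" where
  "copy_step S u v = (if u \<in> S then insert v S else S - {v})"

definition trans_prob :: "'a set \<Rightarrow> ('a \<Rightarrow> 'a \<Rightarrow> bool) \<Rightarrow> real \<Rightarrow> real \<Rightarrow> 'a set \<Rightarrow> 'a set \<Rightarrow> real" where
  "trans_prob V E r \<delta> S T =
     \<delta> * (\<Sum>v\<in>V. (1 / real (card V)) *
            (\<Sum>u\<in>nbrs V E v. (fit r S u / wnb V E r S v) * (if copy_step S u v = T then 1 else 0)))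
   + (1 - \<delta>) * (\<Sum>u\<in>V. (fit r S u / wtot V r S) *
            (\<Sum>v\<in>nbrs V E u. (1 / real (deg V E u)) * (if copy_step S u v = T then 1 else 0)))"

definition absorbed :: "'a set \<Rightarrow> 'a set \<Rightarrow> bool" where
  "absorbed V S \<longleftrightarrow> S = {} \<or> S = V"

text \<open>Probability that the process started in S is not yet absorbed after n steps, P(T > n).\<close>
fun not_absorbed :: "'a set \<Rightarrow> ('a \<Rightarrow> 'a \<Rightarrow> bool) \<Rightarrow> real \<Rightarrow> real \<Rightarrow> nat \<Rightarrow> 'a set \<Rightarrow> real" where
  "not_absorbed V E r \<delta> 0 S = (if absorbed V S then 0 else 1)"
| "not_absorbed V E r \<delta> (Suc n) S =
     (if absorbed V S then 0
      else (\<Sum>T\<in>Pow V. trans_prob V E r \<delta> S T * not_absorbed V E r \<delta> n T))"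

text \<open>Expected absorption time AT(G,S0) = sum_n P(T > n) (possibly infinite).\<close>
definition AT_from :: "'a set \<Rightarrow> ('a \<Rightarrow> 'a \<Rightarrow> bool) \<Rightarrow> real \<Rightarrow> real \<Rightarrow> 'a set \<Rightarrow> ennreal" where
  "AT_from V E r \<delta> S0 = (\<Sum>n. ennreal (not_absorbed V E r \<delta> n S0))"

definition AT :: "'a set \<Rightarrow> ('a \<Rightarrow> 'a \<Rightarrow> bool) \<Rightarrow> real \<Rightarrow> real \<Rightarrow> ennreal" where
  "AT V E r \<delta> = (SUP S0\<in>Pow V. AT_from V E r \<delta> S0)"

end

theory Submission
  imports Defs
begin

(* The number of wild-type vertices, N - |S|, drifts down by at least d = (r - 1) / (r N^3) per
   step until absorption.  Its expected one-step decrease is exactly the sum of psi over the edges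
   from S to its complement: the moves across an edge in its two orientations change |S| by +1
   and -1, and at a boundary edge u -> v their probabilities differ by psi(u, v).  At delta = 1/2
   the possibly negative Birth-death part of psi is compensated by the death-Birth part, which
   gives psi >= d on every boundary edge.  Additive drift then bounds the expected absorption
   time by N / d = r / (r - 1) * N^4. *)

lemma simple_graph_edge_in_V:
  assumes "simple_graph V E" "E x y"
  shows "x \<in> V" "y \<in> V"
  using assms unfolding simple_graph_def by blast+

lemma simple_graph_sym:
  assumes "simple_graph V E" "E x y"
  shows "E y x"
  using assms unfolding simple_graph_def by blast

lemma finite_nbrs: "simple_graph V E \<Longrightarrow> finite (nbrs V E x)"
  unfolding nbrs_def simple_graph_def by auto

lemma mem_nbrs_iff: "simple_graph V E \<Longrightarrow> y \<in> nbrs V E x \<longleftrightarrow> E x y"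
  unfolding nbrs_def simple_graph_def by auto

lemma deg_le_card: "simple_graph V E \<Longrightarrow> deg V E x \<le> card V"
  unfolding deg_def simple_graph_def by (intro card_mono) (auto simp: nbrs_def)

lemma deg_pos: "simple_graph V E \<Longrightarrow> E x y \<Longrightarrow> 0 < deg V E x"
  unfolding deg_def using finite_nbrs mem_nbrs_iff by (metis card_gt_0_iff empty_iff)

lemma connected_graph_simple: "connected_graph V E \<Longrightarrow> simple_graph V E"
  by (simp add: connected_graph_def)

lemma connected_boundary_edge:
  assumes cg: "connected_graph V E" and S: "S \<subseteq> V" "S \<noteq> {}" "S \<noteq> V"
  obtains u v where "E u v" "u \<in> S" "v \<notin> S"
proof -
  obtain x y where x: "x \<in> S" and y: "y \<in> V" "y \<notin> S" using S by blast
  have "E\<^sup>*\<^sup>* x y" using cg x y S(1) by (auto simp: connected_graph_def)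
  then have "\<exists>u v. E u v \<and> u \<in> S \<and> v \<notin> S"
    using x y(2) by (induction rule: rtranclp_induct) auto
  then show ?thesis using that by blast
qed

lemma connected_nbrs_nonempty:
  assumes cg: "connected_graph V E" and "x \<in> V" "y \<in> V" "x \<noteq> y"
  shows "nbrs V E x \<noteq> {}"
proof -
  have "E\<^sup>*\<^sup>* x y" using cg assms by (auto simp: connected_graph_def)
  then obtain z where "E x z" using \<open>x \<noteq> y\<close> by (metis converse_rtranclpE)
  then show ?thesis
    using mem_nbrs_iff[OF connected_graph_simple[OF cg]] by blast
qed

definition boundary_edges :: "('a \<Rightarrow> 'a \<Rightarrow> bool) \<Rightarrow> 'a set \<Rightarrow> ('a \<times> 'a) set" where
  "boundary_edges E S = {(u, v). E u v \<and> u \<in> S \<and> v \<notin> S}"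

lemma finite_arcs: "simple_graph V E \<Longrightarrow> finite {(u, v). E u v}"
  by (rule finite_subset[of _ "V \<times> V"]) (auto simp: simple_graph_def)

lemma finite_boundary_edges: "simple_graph V E \<Longrightarrow> finite (boundary_edges E S)"
  unfolding boundary_edges_def by (rule finite_subset[OF _ finite_arcs]) auto

lemma sum_arcs_swap:
  assumes g: "simple_graph V E"
  shows "(\<Sum>(u, v)\<in>{(u, v). E u v}. f v u) = (\<Sum>(u, v)\<in>{(u, v). E u v}. f u v)"
proof -
  have "prod.swap ` {(u, v). E u v} = {(u, v). E u v}"
    using simple_graph_sym[OF g] by auto
  then have "(\<Sum>(u, v)\<in>{(u, v). E u v}. f u v) = (\<Sum>(u, v)\<in>prod.swap ` {(u, v). E u v}. f u v)"
    by simp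
  also have "\<dots> = (\<Sum>(u, v)\<in>{(u, v). E u v}. f v u)"
    by (subst sum.reindex[OF inj_swap]) (simp add: comp_def case_prod_beta)
  finally show ?thesis ..
qed

lemma sum_nbrs_eq_sum_arcs:
  assumes g: "simple_graph V E"
  shows "(\<Sum>u\<in>V. \<Sum>v\<in>nbrs V E u. f u v) = (\<Sum>(u, v)\<in>{(u, v). E u v}. f u v)"
    and "(\<Sum>v\<in>V. \<Sum>u\<in>nbrs V E v. f u v) = (\<Sum>(u, v)\<in>{(u, v). E u v}. f u v)"
proof -
  have "Sigma V (nbrs V E) = {(u, v). E u v}"
    using g by (auto simp: nbrs_def simple_graph_def)
  then have out_arcs: "(\<Sum>u\<in>V. \<Sum>v\<in>nbrs V E u. g u v) = (\<Sum>(u, v)\<in>{(u, v). E u v}. g u v)"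
    for g :: "'a \<Rightarrow> 'a \<Rightarrow> 'b"
    using g by (simp add: sum.Sigma finite_nbrs simple_graph_def)
  show "(\<Sum>u\<in>V. \<Sum>v\<in>nbrs V E u. f u v) = (\<Sum>(u, v)\<in>{(u, v). E u v}. f u v)"
    by (rule out_arcs)
  show "(\<Sum>v\<in>V. \<Sum>u\<in>nbrs V E v. f u v) = (\<Sum>(u, v)\<in>{(u, v). E u v}. f u v)"
    using out_arcs[of "\<lambda>v u. f u v"] sum_arcs_swap[OF g, of f] by simp
qed

lemma sum_arcs_flux:
  fixes a :: "'a \<Rightarrow> 'a \<Rightarrow> real"
  assumes g: "simple_graph V E"
  shows "(\<Sum>(u, v)\<in>{(u, v). E u v}.
            a u v * ((if u \<in> S \<and> v \<notin> S then 1 else 0) - (if u \<notin> S \<and> v \<in> S then 1 else 0)))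
       = (\<Sum>(u, v)\<in>boundary_edges E S. a u v - a v u)"
proof -
  have restrict: "(\<Sum>(u, v)\<in>{(u, v). E u v}. if u \<in> S \<and> v \<notin> S then f u v else 0)
      = (\<Sum>(u, v)\<in>boundary_edges E S. f u v)" for f :: "'a \<Rightarrow> 'a \<Rightarrow> real"
  proof -
    have "boundary_edges E S = {p \<in> {(u, v). E u v}. fst p \<in> S \<and> snd p \<notin> S}"
      unfolding boundary_edges_def by auto
    then show ?thesis
      using finite_arcs[OF g] by (simp only:) (subst sum.inter_filter; auto intro!: sum.cong)
  qed
  have "(\<Sum>(u, v)\<in>{(u, v). E u v}.
            a u v * ((if u \<in> S \<and> v \<notin> S then 1 else 0) - (if u \<notin> S \<and> v \<in> S then 1 else 0)))
      = (\<Sum>(u, v)\<in>{(u, v). E u v}. if u \<in> S \<and> v \<notin> S then a u v else 0)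
      - (\<Sum>(u, v)\<in>{(u, v). E u v}. if u \<notin> S \<and> v \<in> S then a u v else 0)"
    by (auto simp: sum_subtractf[symmetric] case_prod_beta intro!: sum.cong)
  also have "(\<Sum>(u, v)\<in>{(u, v). E u v}. if u \<notin> S \<and> v \<in> S then a u v else 0)
      = (\<Sum>(u, v)\<in>{(u, v). E u v}. if u \<in> S \<and> v \<notin> S then a v u else 0)"
    using sum_arcs_swap[OF g, of "\<lambda>u v. if u \<notin> S \<and> v \<in> S then a u v else 0"]
    by (simp add: conj_commute)
  also have "(\<Sum>(u, v)\<in>{(u, v). E u v}. if u \<in> S \<and> v \<notin> S then a u v else 0)
      - (\<Sum>(u, v)\<in>{(u, v). E u v}. if u \<in> S \<and> v \<notin> S then a v u else 0)
      = (\<Sum>(u, v)\<in>boundary_edges E S. a u v - a v u)"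
    unfolding restrict by (simp add: sum_subtractf case_prod_beta)
  finally show ?thesis .
qed

lemma sum_fit_bounds:
  assumes "1 \<le> r"
  shows "real (card A) \<le> (\<Sum>x\<in>A. fit r S x)" "(\<Sum>x\<in>A. fit r S x) \<le> r * real (card A)"
proof -
  have "(\<Sum>x\<in>A. 1) \<le> (\<Sum>x\<in>A. fit r S x)" "(\<Sum>x\<in>A. fit r S x) \<le> (\<Sum>x\<in>A. r)"
    by (intro sum_mono; use assms in \<open>simp add: fit_def\<close>)+
  then show "real (card A) \<le> (\<Sum>x\<in>A. fit r S x)" "(\<Sum>x\<in>A. fit r S x) \<le> r * real (card A)"
    by (simp_all add: mult.commute)
qed

lemma psi_half_real_bound:
  fixes r N w du dv wu wv :: real
  assumes r: "1 < r" and du: "1 \<le> du" "du \<le> N" and dv: "1 \<le> dv" "dv \<le> N"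
    and wu: "du \<le> wu" and wv: "0 < wv" "wv \<le> r * dv" and w: "N \<le> w" "w \<le> r * N"
  shows "(r - 1) / (r * N\<^sup>2) \<le> (r / du - 1 / dv) / w + (r / wv - 1 / wu) / N"
proof -
  have N: "0 < N" and wpos: "0 < w" using du w by linarith+
  have "1 / dv \<le> r / wv"
    using wv dv r by (simp add: divide_simps mult.commute)
  moreover have "1 / wu \<le> 1 / du"
    using wu du by (simp add: frac_le)
  ultimately have "(1 / dv - 1 / du) / N \<le> (r / wv - 1 / wu) / N"
    using N by (intro divide_right_mono) auto
  then have "(1 / du) * (r / w - 1 / N) + (1 / dv) * (1 / N - 1 / w)
      \<le> (r / du - 1 / dv) / w + (r / wv - 1 / wu) / N"
    by (simp add: algebra_simps diff_divide_distrib)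
  moreover have "(1 / N) * (r / w - 1 / N) + (1 / N) * (1 / N - 1 / w)
      \<le> (1 / du) * (r / w - 1 / N) + (1 / dv) * (1 / N - 1 / w)"
  proof (intro add_mono mult_right_mono)
    show "1 / N \<le> 1 / du" "1 / N \<le> 1 / dv" using du dv by (simp_all add: frac_le)
    show "0 \<le> r / w - 1 / N" "0 \<le> 1 / N - 1 / w"
      using w N wpos by (simp_all add: divide_simps mult.commute)
  qed
  moreover have "(r - 1) / (r * N\<^sup>2) \<le> (1 / N) * (r / w - 1 / N) + (1 / N) * (1 / N - 1 / w)"
  proof -
    have "(r - 1) / (r * N) / N \<le> (r - 1) / w / N"
      using r w wpos N by (intro divide_right_mono divide_left_mono) auto
    moreover have "(1 / N) * (r / w - 1 / N) + (1 / N) * (1 / N - 1 / w) = (r - 1) / w / N"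
      using N wpos by (simp add: field_simps)
    ultimately show ?thesis by (simp add: power2_eq_square mult.assoc)
  qed
  ultimately show ?thesis by linarith
qed

lemma psi_half_ge:
  assumes g: "simple_graph V E" and r: "1 < r"
    and uv: "E u v" "u \<in> S" "v \<notin> S"
  shows "(r - 1) / (r * real (card V) ^ 3) \<le> psi V E r (1/2) S u v"
proof -
  let ?N = "real (card V)" and ?du = "real (deg V E u)" and ?dv = "real (deg V E v)"
  have vu: "E v u" using simple_graph_sym[OF g uv(1)] .
  have "card {u, v} \<le> card V"
    using g simple_graph_edge_in_V[OF g uv(1)] by (intro card_mono) (auto simp: simple_graph_def)
  moreover have "u \<noteq> v" using uv by auto
  ultimately have N: "2 \<le> ?N" by simp
  have wnb_bounds: "real (deg V E x) \<le> wnb V E r S x" "wnb V E r S x \<le> r * real (deg V E x)" for x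
    unfolding wnb_def deg_def using sum_fit_bounds[where A = "nbrs V E x"] r by simp_all
  have "(r - 1) / (r * ?N\<^sup>2)
      \<le> (r / ?du - 1 / ?dv) / wtot V r S + (r / wnb V E r S v - 1 / wnb V E r S u) / ?N"
  proof (rule psi_half_real_bound)
    show "1 \<le> ?du" "1 \<le> ?dv" using deg_pos[OF g] uv(1) vu by (simp_all add: Suc_le_eq)
    then show "0 < wnb V E r S v" using wnb_bounds(1)[of v] by linarith
    show "?du \<le> ?N" "?dv \<le> ?N" using deg_le_card[OF g] by simp_all
    show "?N \<le> wtot V r S" "wtot V r S \<le> r * ?N"
      unfolding wtot_def using sum_fit_bounds[where A = V] r by simp_all
  qed (use r wnb_bounds in auto)
  moreover have "(r - 1) / (r * ?N ^ 3) \<le> (r - 1) / (r * ?N\<^sup>2) / 2"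
  proof -
    have "(r - 1) / (r * ?N ^ 3) = (r - 1) / (r * ?N\<^sup>2) / ?N"
      by (simp add: power_numeral_reduce power2_eq_square mult.assoc)
    also have "\<dots> \<le> (r - 1) / (r * ?N\<^sup>2) / 2"
      using r N by (intro divide_left_mono) auto
    finally show ?thesis .
  qed
  moreover have "psi V E r (1/2) S u v
      = ((r / ?du - 1 / ?dv) / wtot V r S + (r / wnb V E r S v - 1 / wnb V E r S u) / ?N) / 2"
    unfolding psi_def by (simp add: add_divide_distrib mult.commute)
  ultimately show ?thesis by (smt (verit) divide_right_mono)
qed

lemma sum_pushforward:
  fixes a :: "'a \<Rightarrow> 'c :: comm_semiring_1"
  assumes "finite B" "\<And>x y. x \<in> A \<Longrightarrow> y \<in> C x \<Longrightarrow> c x y \<in> B"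
  shows "(\<Sum>T\<in>B. (\<Sum>x\<in>A. a x * (\<Sum>y\<in>C x. p x y * (if c x y = T then 1 else 0))) * h T)
       = (\<Sum>x\<in>A. a x * (\<Sum>y\<in>C x. p x y * h (c x y)))"
proof -
  have "(\<Sum>T\<in>B. (\<Sum>x\<in>A. a x * (\<Sum>y\<in>C x. p x y * (if c x y = T then 1 else 0))) * h T)
      = (\<Sum>x\<in>A. \<Sum>y\<in>C x. \<Sum>T\<in>B. a x * (p x y * ((if c x y = T then 1 else 0) * h T)))"
    by (simp add: sum_distrib_left sum_distrib_right mult.assoc sum.swap[where A = B])
  also have "\<dots> = (\<Sum>x\<in>A. \<Sum>y\<in>C x. a x * (p x y * h (c x y)))"
    using assms by (intro sum.cong refl) (simp add: if_distrib if_distribR cong: if_cong)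
  finally show ?thesis by (simp add: sum_distrib_left)
qed

lemma trans_prob_expectation:
  assumes "finite V" "S \<subseteq> V"
  shows "(\<Sum>T\<in>Pow V. trans_prob V E r \<delta> S T * h T)
     = \<delta> * (\<Sum>v\<in>V. 1 / real (card V) *
              (\<Sum>u\<in>nbrs V E v. fit r S u / wnb V E r S v * h (copy_step S u v)))
     + (1 - \<delta>) * (\<Sum>u\<in>V. fit r S u / wtot V r S *
              (\<Sum>v\<in>nbrs V E u. 1 / real (deg V E u) * h (copy_step S u v)))"
proof -
  have "(\<Sum>T\<in>Pow V. trans_prob V E r \<delta> S T * h T)
     = \<delta> * (\<Sum>T\<in>Pow V. (\<Sum>v\<in>V. 1 / real (card V) *
              (\<Sum>u\<in>nbrs V E v. fit r S u / wnb V E r S v * (if copy_step S u v = T then 1 else 0))) * h T)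
     + (1 - \<delta>) * (\<Sum>T\<in>Pow V. (\<Sum>u\<in>V. fit r S u / wtot V r S *
              (\<Sum>v\<in>nbrs V E u. 1 / real (deg V E u) * (if copy_step S u v = T then 1 else 0))) * h T)"
    unfolding trans_prob_def distrib_right sum.distrib by (simp add: mult.assoc flip: sum_distrib_left)
  also have "\<dots> = \<delta> * (\<Sum>v\<in>V. 1 / real (card V) *
              (\<Sum>u\<in>nbrs V E v. fit r S u / wnb V E r S v * h (copy_step S u v)))
     + (1 - \<delta>) * (\<Sum>u\<in>V. fit r S u / wtot V r S *
              (\<Sum>v\<in>nbrs V E u. 1 / real (deg V E u) * h (copy_step S u v)))"
    using assms by (subst (1 2) sum_pushforward[where B = "Pow V"]) (auto simp: copy_step_def nbrs_def)
  finally show ?thesis .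
qed

lemma trans_prob_nonneg:
  assumes "0 \<le> \<delta>" "\<delta> \<le> 1" "0 < r"
  shows "0 \<le> trans_prob V E r \<delta> S T"
proof -
  have fit: "0 \<le> fit r S x" for x
    using assms by (simp add: fit_def)
  then have "0 \<le> wnb V E r S x" "0 \<le> wtot V r S" for x
    unfolding wnb_def wtot_def by (simp_all add: sum_nonneg)
  then show ?thesis
    unfolding trans_prob_def using assms fit
    by (intro add_nonneg_nonneg mult_nonneg_nonneg sum_nonneg) auto
qed

lemma sum_trans_prob:
  assumes g: "simple_graph V E" and S: "S \<subseteq> V" and r: "0 < r"
    and nbrs_ne: "\<And>x. x \<in> V \<Longrightarrow> nbrs V E x \<noteq> {}"
  shows "(\<Sum>T\<in>Pow V. trans_prob V E r \<delta> S T) = 1"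
proof -
  have fin: "finite V" "V \<noteq> {}" using g by (auto simp: simple_graph_def)
  have fit: "0 < fit r S x" for x
    using r by (simp add: fit_def)
  have birth: "(\<Sum>u\<in>nbrs V E v. fit r S u / wnb V E r S v) = 1" if "v \<in> V" for v
  proof -
    have "0 < wnb V E r S v"
      unfolding wnb_def using fit finite_nbrs[OF g] nbrs_ne[OF that] by (intro sum_pos)
    then show ?thesis by (simp add: wnb_def flip: sum_divide_distrib)
  qed
  have death: "(\<Sum>v\<in>nbrs V E u. 1 / real (deg V E u)) = 1" if "u \<in> V" for u
    using finite_nbrs[OF g] nbrs_ne[OF that] by (simp add: deg_def)
  have "0 < wtot V r S"
    unfolding wtot_def using fit fin by (intro sum_pos)
  then have fitness: "(\<Sum>u\<in>V. fit r S u / wtot V r S) = 1"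
    by (simp add: wtot_def flip: sum_divide_distrib)
  have "(\<Sum>T\<in>Pow V. trans_prob V E r \<delta> S T) = (\<Sum>T\<in>Pow V. trans_prob V E r \<delta> S T * 1)"
    by simp
  also have "\<dots> = \<delta> * (\<Sum>v\<in>V. 1 / real (card V) * (\<Sum>u\<in>nbrs V E v. fit r S u / wnb V E r S v * 1))
     + (1 - \<delta>) * (\<Sum>u\<in>V. fit r S u / wtot V r S * (\<Sum>v\<in>nbrs V E u. 1 / real (deg V E u) * 1))"
    by (rule trans_prob_expectation[OF fin(1) S])
  also have "\<dots> = \<delta> * (\<Sum>v\<in>V. 1 / real (card V)) + (1 - \<delta>) * (\<Sum>u\<in>V. fit r S u / wtot V r S)"
    using birth death by (simp only: mult_1_right cong: sum.cong)
  also have "\<dots> = 1"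
    using fin fitness by simp
  finally show ?thesis .
qed

lemma card_copy_step:
  assumes "finite S"
  shows "real (card (copy_step S u v)) - real (card S)
       = (if u \<in> S \<and> v \<notin> S then 1 else 0) - (if u \<notin> S \<and> v \<in> S then 1 else 0)"
proof -
  have "1 \<le> card S" if "v \<in> S"
    using assms that by (metis One_nat_def Suc_leI card_gt_0_iff empty_iff)
  then show ?thesis
    using assms by (auto simp: copy_step_def card_insert_if card_Diff_singleton_if of_nat_diff)
qed

lemma expected_card_increase:
  assumes g: "simple_graph V E" and S: "S \<subseteq> V"
  shows "(\<Sum>T\<in>Pow V. trans_prob V E r \<delta> S T * (real (card T) - real (card S)))
       = (\<Sum>(u, v)\<in>boundary_edges E S. psi V E r \<delta> S u v)"
proof -
  have fin: "finite V" using g by (simp add: simple_graph_def)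
  then have "finite S" using S by (rule finite_subset[rotated])
  define ind :: "'a \<Rightarrow> 'a \<Rightarrow> real"
    where "ind u v = (if u \<in> S \<and> v \<notin> S then 1 else 0) - (if u \<notin> S \<and> v \<in> S then 1 else 0)" for u v
  define birth where "birth u v = \<delta> * (1 / real (card V)) * (fit r S u / wnb V E r S v)" for u v
  define death where "death u (v :: 'a) = (1 - \<delta>) * (fit r S u / wtot V r S) * (1 / real (deg V E u))" for u v
  define a where "a u v = birth u v + death u v" for u v
  have "(\<Sum>T\<in>Pow V. trans_prob V E r \<delta> S T * (real (card T) - real (card S)))
     = \<delta> * (\<Sum>v\<in>V. 1 / real (card V) * (\<Sum>u\<in>nbrs V E v. fit r S u / wnb V E r S v * ind u v))
     + (1 - \<delta>) * (\<Sum>u\<in>V. fit r S u / wtot V r S * (\<Sum>v\<in>nbrs V E u. 1 / real (deg V E u) * ind u v))"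
    using trans_prob_expectation[OF fin S] card_copy_step[OF \<open>finite S\<close>] by (simp add: ind_def)
  also have "\<dots> = (\<Sum>v\<in>V. \<Sum>u\<in>nbrs V E v. birth u v * ind u v)
     + (\<Sum>u\<in>V. \<Sum>v\<in>nbrs V E u. death u v * ind u v)"
    by (simp add: birth_def death_def sum_distrib_left mult.assoc)
  also have "\<dots> = (\<Sum>(u, v)\<in>{(u, v). E u v}. a u v * ind u v)"
    using sum_nbrs_eq_sum_arcs(2)[OF g, of "\<lambda>u v. birth u v * ind u v"]
      sum_nbrs_eq_sum_arcs(1)[OF g, of "\<lambda>u v. death u v * ind u v"]
    by (simp add: a_def sum.distrib[symmetric] case_prod_beta distrib_right)
  also have "\<dots> = (\<Sum>(u, v)\<in>boundary_edges E S. a u v - a v u)"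
    unfolding ind_def by (rule sum_arcs_flux[OF g])
  also have "\<dots> = (\<Sum>(u, v)\<in>boundary_edges E S. psi V E r \<delta> S u v)"
    by (intro sum.cong refl)
      (auto simp: boundary_edges_def a_def birth_def death_def psi_def fit_def algebra_simps;
        simp add: diff_divide_distrib mult.commute)
  finally show ?thesis .
qed

lemma drift_card_complement:
  assumes cg: "connected_graph V E" and r: "1 < r" and S: "S \<subseteq> V" "S \<noteq> {}" "S \<noteq> V"
  shows "(\<Sum>T\<in>Pow V. trans_prob V E r (1/2) S T * (real (card V) - real (card T)))
       \<le> (real (card V) - real (card S)) - (r - 1) / (r * real (card V) ^ 3)"
proof -
  let ?d = "(r - 1) / (r * real (card V) ^ 3)" and ?P = "trans_prob V E r (1/2) S"
  have g: "simple_graph V E" using cg by (rule connected_graph_simple)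
  obtain u v where uv: "E u v" "u \<in> S" "v \<notin> S"
    using connected_boundary_edge[OF cg S] .
  have nbrs_ne: "nbrs V E x \<noteq> {}" if "x \<in> V" for x
    using connected_nbrs_nonempty[OF cg that] uv simple_graph_edge_in_V[OF g uv(1)] by metis
  have psi_ge: "?d \<le> psi V E r (1/2) S x y" if "(x, y) \<in> boundary_edges E S" for x y
    using psi_half_ge[OF g r] that by (simp add: boundary_edges_def)
  have "?d \<le> psi V E r (1/2) S u v"
    using psi_ge uv by (simp add: boundary_edges_def)
  also have "\<dots> \<le> (\<Sum>(x, y)\<in>boundary_edges E S. psi V E r (1/2) S x y)"
  proof -
    have "0 \<le> ?d" using r by simp
    then have "0 \<le> psi V E r (1/2) S x y" if "(x, y) \<in> boundary_edges E S" for x y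
      using psi_ge[OF that] by linarith
    then show ?thesis
      using member_le_sum[of "(u, v)" "boundary_edges E S" "\<lambda>(x, y). psi V E r (1/2) S x y"]
        uv finite_boundary_edges[OF g] by (force simp: boundary_edges_def)
  qed
  finally have flux: "?d \<le> (\<Sum>(x, y)\<in>boundary_edges E S. psi V E r (1/2) S x y)" .
  have "(\<Sum>T\<in>Pow V. ?P T * (real (card V) - real (card T)))
      = (real (card V) - real (card S)) * (\<Sum>T\<in>Pow V. ?P T)
        - (\<Sum>T\<in>Pow V. ?P T * (real (card T) - real (card S)))"
    by (simp add: sum_distrib_left sum_subtractf[symmetric] algebra_simps)
  also have "\<dots> = (real (card V) - real (card S)) - (\<Sum>(x, y)\<in>boundary_edges E S. psi V E r (1/2) S x y)"
    using sum_trans_prob[OF g S(1) _ nbrs_ne] expected_card_increase[OF g S(1)] r by simp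
  finally show ?thesis using flux by linarith
qed

lemma not_absorbed_nonneg:
  assumes "0 \<le> \<delta>" "\<delta> \<le> 1" "0 < r"
  shows "0 \<le> not_absorbed V E r \<delta> n S"
  using trans_prob_nonneg[OF assms]
  by (induction n arbitrary: S) (auto intro!: sum_nonneg mult_nonneg_nonneg)

lemma not_absorbed_absorbed: "absorbed V S \<Longrightarrow> not_absorbed V E r \<delta> n S = 0"
  by (cases n) simp_all

lemma additive_drift_partial_sums:
  assumes \<delta>: "0 \<le> \<delta>" "\<delta> \<le> 1" and r: "0 < r"
    and \<phi>_nonneg: "\<And>S. S \<subseteq> V \<Longrightarrow> 0 \<le> \<phi> S"
    and drift: "\<And>S. S \<subseteq> V \<Longrightarrow> \<not> absorbed V S \<Longrightarrow>
                  (\<Sum>T\<in>Pow V. trans_prob V E r \<delta> S T * \<phi> T) \<le> \<phi> S - d"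
    and S: "S \<subseteq> V"
  shows "d * (\<Sum>k<n. not_absorbed V E r \<delta> k S) \<le> \<phi> S"
  using S
proof (induction n arbitrary: S)
  case 0
  then show ?case using \<phi>_nonneg by simp
next
  case (Suc n)
  let ?p = "\<lambda>k T. not_absorbed V E r \<delta> k T" and ?P = "trans_prob V E r \<delta> S"
  show ?case
  proof (cases "absorbed V S")
    case True
    then show ?thesis using \<phi>_nonneg[OF Suc.prems] by (simp add: not_absorbed_absorbed)
  next
    case False
    have "(\<Sum>k<Suc n. ?p k S) = ?p 0 S + (\<Sum>k<n. ?p (Suc k) S)"
      by (rule sum.lessThan_Suc_shift)
    also have "\<dots> = 1 + (\<Sum>T\<in>Pow V. ?P T * (\<Sum>k<n. ?p k T))"
      using False by (simp add: sum_distrib_left sum.swap[where B = "Pow V"])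
    finally have "d * (\<Sum>k<Suc n. ?p k S) = d + (\<Sum>T\<in>Pow V. ?P T * (d * (\<Sum>k<n. ?p k T)))"
      by (simp add: distrib_left sum_distrib_left mult.left_commute)
    also have "\<dots> \<le> d + (\<Sum>T\<in>Pow V. ?P T * \<phi> T)"
      using Suc.IH trans_prob_nonneg[OF \<delta> r]
      by (intro add_left_mono sum_mono mult_left_mono) auto
    also have "\<dots> \<le> \<phi> S"
      using drift[OF Suc.prems False] by simp
    finally show ?thesis .
  qed
qed

lemma AT_le_additive_drift:
  assumes \<delta>: "0 \<le> \<delta>" "\<delta> \<le> 1" and r: "0 < r" and d: "0 < d"
    and \<phi>_bounds: "\<And>S. S \<subseteq> V \<Longrightarrow> 0 \<le> \<phi> S \<and> \<phi> S \<le> B"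
    and drift: "\<And>S. S \<subseteq> V \<Longrightarrow> \<not> absorbed V S \<Longrightarrow>
                  (\<Sum>T\<in>Pow V. trans_prob V E r \<delta> S T * \<phi> T) \<le> \<phi> S - d"
  shows "AT V E r \<delta> \<le> ennreal (B / d)"
  unfolding AT_def AT_from_def
proof (rule SUP_least, rule suminf_le_const)
  fix S n assume "S \<in> Pow V"
  then have "d * (\<Sum>k<n. not_absorbed V E r \<delta> k S) \<le> B"
    using additive_drift_partial_sums[OF \<delta> r _ drift] \<phi>_bounds by (meson PowD order_trans)
  then have "(\<Sum>k<n. not_absorbed V E r \<delta> k S) \<le> B / d"
    using d by (simp add: le_divide_eq mult.commute)
  then show "(\<Sum>k<n. ennreal (not_absorbed V E r \<delta> k S)) \<le> ennreal (B / d)"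
    using not_absorbed_nonneg[OF \<delta> r] by (subst sum_ennreal) (auto intro: ennreal_leI)
qed simp

theorem mainTheorem12:
  fixes V :: "'a set" and E :: "'a \<Rightarrow> 'a \<Rightarrow> bool" and r :: real
  assumes "connected_graph V E" and "r > 1"
  shows "(\<forall>S u v. S \<subseteq> V \<and> S \<noteq> {} \<and> S \<noteq> V \<and> E u v \<and> u \<in> S \<and> v \<notin> S \<longrightarrow>
            psi V E r (1/2) S u v \<ge> (r - 1) / (r * real (card V) ^ 3))
       \<and> AT V E r (1/2) \<le> ennreal (r / (r - 1) * real (card V) ^ 4)"
proof
  have g: "simple_graph V E" using assms(1) by (rule connected_graph_simple)
  show "\<forall>S u v. S \<subseteq> V \<and> S \<noteq> {} \<and> S \<noteq> V \<and> E u v \<and> u \<in> S \<and> v \<notin> S \<longrightarrow>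
            psi V E r (1/2) S u v \<ge> (r - 1) / (r * real (card V) ^ 3)"
    using psi_half_ge[OF g assms(2)] by blast
  let ?N = "real (card V)"
  have N: "0 < ?N" using g by (simp add: simple_graph_def card_gt_0_iff)
  have "AT V E r (1/2) \<le> ennreal (?N / ((r - 1) / (r * ?N ^ 3)))"
  proof (rule AT_le_additive_drift[where \<phi> = "\<lambda>S. ?N - real (card S)"])
    show "0 < (r - 1) / (r * ?N ^ 3)" using assms(2) N by simp
    show "0 \<le> ?N - real (card S) \<and> ?N - real (card S) \<le> ?N" if "S \<subseteq> V" for S
      using card_mono[OF _ that] g by (simp add: simple_graph_def)
    show "(\<Sum>T\<in>Pow V. trans_prob V E r (1/2) S T * (?N - real (card T)))
        \<le> ?N - real (card S) - (r - 1) / (r * ?N ^ 3)" if "S \<subseteq> V" "\<not> absorbed V S" for S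
      using drift_card_complement[OF assms that(1)] that(2) by (simp add: absorbed_def)
  qed (use assms(2) in auto)
  also have "?N / ((r - 1) / (r * ?N ^ 3)) = r / (r - 1) * ?N ^ 4"
    using assms(2) N by (simp add: field_simps power_numeral_reduce)
  finally show "AT V E r (1/2) \<le> ennreal (r / (r - 1) * ?N ^ 4)" .
qed

end
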